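(* Let $f:[0,\infty)\to\mathbb{R}$ be four times differentiable with $f(0)\ge0$, $f'(0)\ge0$, and $f^{(4)}(u)>0$ for all $u>0$. Then the function $u\mapsto f(u)/u^2$ is strictly convex on $(0,\infty)$. *)

theory Defs
  imports "HOL-Analysis.Analysis"
begin

definition strict_convex_on :: "real set \<Rightarrow> (real \<Rightarrow> real) \<Rightarrow> bool" where
  "strict_convex_on S f \<longleftrightarrow> convex S \<and>
     (\<forall>x\<in>S. \<forall>y\<in>S. \<forall>t::real. x \<noteq> y \<and> 0 < t \<and> t < 1 \<longrightarrow>
        f ((1 - t) * x + t * y) < (1 - t) * f x + t * f y)"

end

theory Submission
  imports Defs
begin

text \<open>Two applications of the quotient rule give \<open>(f / u\<^sup>2)'' = H / u ^ 4\<close> with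
  \<open>H = u\<^sup>2 f'' - 4 u f' + 6 f\<close>, so it suffices that \<open>H > 0\<close> on \<open>(0, \<infinity>)\<close>. Now
  \<open>H' = u\<^sup>2 f''' - 2 u f'' + 2 f'\<close> and \<open>H'' = u\<^sup>2 f''''\<close> is positive there, while
  \<open>H'(0) = 2 f'(0) \<ge> 0\<close> and \<open>H(0) = 6 f(0) \<ge> 0\<close>; so first \<open>H'\<close> and then \<open>H\<close> is positive.\<close>

lemma has_real_derivative_at_within_atLeast:
  assumes "a < x" and "(F has_real_derivative D) (at x within {a..})"
  shows "(F has_real_derivative D) (at x)"
proof -
  have "at x within {a..} = at x"
    using \<open>a < x\<close> by (intro at_within_interior) auto
  with assms(2) show ?thesis by simp
qed

lemma strict_increase_from_deriv_atLeast:
  fixes F F' :: "real \<Rightarrow> real"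
  assumes deriv: "\<And>x. x \<ge> a \<Longrightarrow> (F has_real_derivative F' x) (at x within {a..})"
    and pos: "\<And>x. x > a \<Longrightarrow> F' x > 0"
    and "a < u"
  shows "F a < F u"
proof (rule DERIV_pos_imp_increasing_open[OF \<open>a < u\<close>])
  show "\<exists>y. (F has_real_derivative y) (at x) \<and> y > 0" if "a < x" for x
    using has_real_derivative_at_within_atLeast[OF that deriv[of x]] pos[OF that] that by auto
  have "continuous_on {a..} F"
    using deriv by (intro DERIV_continuous_on) auto
  then show "continuous_on {a..u} F"
    by (rule continuous_on_subset) auto
qed

lemma DERIV_divide_power:
  fixes g :: "real \<Rightarrow> real"
  assumes "(g has_real_derivative g') (at x within S)" and "x \<noteq> 0"
  shows "((\<lambda>u. g u / u ^ n) has_real_derivative (x * g' - real n * g x) / x ^ Suc n)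
           (at x within S)"
proof -
  have "x ^ n \<noteq> 0" using \<open>x \<noteq> 0\<close> by simp
  then have "((\<lambda>u. g u / u ^ n) has_real_derivative
      (g' * x ^ n - g x * (real n * x ^ (n - 1))) / (x ^ n * x ^ n)) (at x within S)"
    using assms by (auto intro!: derivative_eq_intros)
  also have "(g' * x ^ n - g x * (real n * x ^ (n - 1))) / (x ^ n * x ^ n)
      = (x * g' - real n * g x) / x ^ Suc n"
  proof (cases n)
    case (Suc m)
    then show ?thesis using \<open>x \<noteq> 0\<close> by (simp add: field_simps)
  qed (use \<open>x \<noteq> 0\<close> in simp)
  finally show ?thesis .
qed

lemma strict_convex_onI_less:
  fixes f :: "real \<Rightarrow> real" and S :: "real set"
  assumes "convex S"
    and "\<And>x y (t::real). x \<in> S \<Longrightarrow> y \<in> S \<Longrightarrow> x < y \<Longrightarrow> 0 < t \<Longrightarrow> t < 1 \<Longrightarrow>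
           f ((1 - t) * x + t * y) < (1 - t) * f x + t * f y"
  shows "strict_convex_on S f"
  unfolding strict_convex_on_def
proof (intro conjI ballI allI impI \<open>convex S\<close>)
  fix x y t :: real
  assume "x \<in> S" "y \<in> S" and xyt: "x \<noteq> y \<and> 0 < t \<and> t < 1"
  show "f ((1 - t) * x + t * y) < (1 - t) * f x + t * f y"
  proof (cases "x < y")
    case True
    then show ?thesis using assms(2)[OF \<open>x \<in> S\<close> \<open>y \<in> S\<close>] xyt by blast
  next
    case False
    then have "y < x" using xyt by auto
    with assms(2)[OF \<open>y \<in> S\<close> \<open>x \<in> S\<close>, of "1 - t"] xyt
    have "f ((1 - (1 - t)) * y + (1 - t) * x) < (1 - (1 - t)) * f y + (1 - t) * f x"
      by auto
    then show ?thesis by (simp add: algebra_simps)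
  qed
qed

lemma strict_convex_on_realI:
  fixes g g' :: "real \<Rightarrow> real"
  assumes "convex S"
    and deriv: "\<And>x. x \<in> S \<Longrightarrow> (g has_real_derivative g' x) (at x)"
    and mono: "strict_mono_on S g'"
  shows "strict_convex_on S g"
proof (rule strict_convex_onI_less[OF \<open>convex S\<close>])
  fix x y t :: real
  assume "x \<in> S" "y \<in> S" "x < y" "0 < t" "t < 1"
  define z where "z = (1 - t) * x + t * y"
  have zx: "z - x = t * (y - x)" and yz: "y - z = (1 - t) * (y - x)"
    by (simp_all add: z_def algebra_simps)
  have "x < z" using zx \<open>x < y\<close> \<open>0 < t\<close> by (metis diff_gt_0_iff_gt mult_pos_pos)
  have "z < y" using yz \<open>x < y\<close> \<open>t < 1\<close> by (metis diff_gt_0_iff_gt mult_pos_pos)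
  have "{x..y} \<subseteq> S"
    using connected_contains_Icc[OF convex_connected[OF \<open>convex S\<close>]] \<open>x \<in> S\<close> \<open>y \<in> S\<close> .
  then have deriv_xy: "\<And>w. x \<le> w \<Longrightarrow> w \<le> y \<Longrightarrow> (g has_real_derivative g' w) (at w)"
    using deriv by auto
  obtain a where a: "x < a" "a < z" "g z - g x = (z - x) * g' a"
    using MVT2[OF \<open>x < z\<close>, of g g'] deriv_xy \<open>z < y\<close> by auto
  obtain b where b: "z < b" "b < y" "g y - g z = (y - z) * g' b"
    using MVT2[OF \<open>z < y\<close>, of g g'] deriv_xy \<open>x < z\<close> by auto
  have "g' a < g' b"
    using a b \<open>{x..y} \<subseteq> S\<close> by (intro strict_mono_onD[OF mono]) auto
  have slope_a: "g z - g x = t * (y - x) * g' a" and slope_b: "g y - g z = (1 - t) * (y - x) * g' b"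
    using a(3) b(3) zx yz by simp_all
  have "(1 - t) * g x + t * g y - g z = t * (g y - g z) - (1 - t) * (g z - g x)"
    by (simp add: algebra_simps)
  also have "\<dots> = t * (1 - t) * (y - x) * (g' b - g' a)"
    unfolding slope_a slope_b by (simp add: algebra_simps)
  also have "\<dots> > 0"
    using \<open>0 < t\<close> \<open>t < 1\<close> \<open>x < y\<close> \<open>g' a < g' b\<close> by (intro mult_pos_pos) simp_all
  finally show "g ((1 - t) * x + t * y) < (1 - t) * g x + t * g y"
    by (simp add: z_def)
qed

lemma strict_mono_on_if_deriv_pos:
  fixes G G' :: "real \<Rightarrow> real"
  assumes "convex S"
    and deriv: "\<And>x. x \<in> S \<Longrightarrow> (G has_real_derivative G' x) (at x)"
    and pos: "\<And>x. x \<in> S \<Longrightarrow> G' x > 0"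
  shows "strict_mono_on S G"
proof (rule strict_mono_onI)
  fix a b :: real
  assume "a \<in> S" "b \<in> S" "a < b"
  then have ab: "{a..b} \<subseteq> S"
    using connected_contains_Icc[OF convex_connected[OF \<open>convex S\<close>]] by blast
  show "G a < G b"
  proof (rule DERIV_pos_imp_increasing[OF \<open>a < b\<close>])
    fix x :: real
    assume "a \<le> x" "x \<le> b"
    with ab have "x \<in> S" by auto
    then show "\<exists>y. (G has_real_derivative y) (at x) \<and> y > 0"
      using deriv pos by blast
  qed
qed

lemma second_deriv_divide_square:
  fixes f f1 f2 :: "real \<Rightarrow> real"
  assumes "(f has_real_derivative f1 u) (at u)" and "(f1 has_real_derivative f2 u) (at u)"
    and "u \<noteq> 0"
  shows "((\<lambda>u. (u * f1 u - 2 * f u) / u ^ 3) has_real_derivative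
           (u\<^sup>2 * f2 u - 4 * u * f1 u + 6 * f u) / u ^ 4) (at u)"
proof -
  have "((\<lambda>u. u * f1 u - 2 * f u) has_real_derivative u * f2 u - f1 u) (at u)"
    using assms by (auto intro!: derivative_eq_intros)
  from DERIV_divide_power[OF this \<open>u \<noteq> 0\<close>, of 3]
  have "((\<lambda>u. (u * f1 u - 2 * f u) / u ^ 3) has_real_derivative
           (u * (u * f2 u - f1 u) - real 3 * (u * f1 u - 2 * f u)) / u ^ Suc 3) (at u)" .
  also have "(u * (u * f2 u - f1 u) - real 3 * (u * f1 u - 2 * f u)) / u ^ Suc 3
      = (u\<^sup>2 * f2 u - 4 * u * f1 u + 6 * f u) / u ^ 4"
    by (simp add: power2_eq_square algebra_simps)
  finally show ?thesis .
qed

lemma strict_convex_on_divide_square: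
  fixes f f1 f2 :: "real \<Rightarrow> real"
  assumes d1: "\<And>u. u > 0 \<Longrightarrow> (f has_real_derivative f1 u) (at u)"
    and d2: "\<And>u. u > 0 \<Longrightarrow> (f1 has_real_derivative f2 u) (at u)"
    and pos: "\<And>u. u > 0 \<Longrightarrow> u\<^sup>2 * f2 u - 4 * u * f1 u + 6 * f u > 0"
  shows "strict_convex_on {0<..} (\<lambda>u. f u / u\<^sup>2)"
proof (rule strict_convex_on_realI)
  show "((\<lambda>u. f u / u\<^sup>2) has_real_derivative (u * f1 u - 2 * f u) / u ^ 3) (at u)"
    if "u \<in> {0<..}" for u
    using DERIV_divide_power[OF d1, of u 2] that by simp
  show "strict_mono_on {0<..} (\<lambda>u. (u * f1 u - 2 * f u) / u ^ 3)"
  proof (rule strict_mono_on_if_deriv_pos)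
    show "((\<lambda>u. (u * f1 u - 2 * f u) / u ^ 3) has_real_derivative
           (u\<^sup>2 * f2 u - 4 * u * f1 u + 6 * f u) / u ^ 4) (at u)" if "u \<in> {0<..}" for u
      using second_deriv_divide_square[of f f1 u f2] d1 d2 that by simp
    show "(u\<^sup>2 * f2 u - 4 * u * f1 u + 6 * f u) / u ^ 4 > 0" if "u \<in> {0<..}" for u
      using pos[of u] that by simp
  qed simp
qed simp

theorem lemma5:
  fixes f f1 f2 f3 f4 :: "real \<Rightarrow> real"
  assumes d1: "\<And>x. x \<ge> 0 \<Longrightarrow> (f has_real_derivative f1 x) (at x within {0..})"
    and d2: "\<And>x. x \<ge> 0 \<Longrightarrow> (f1 has_real_derivative f2 x) (at x within {0..})"
    and d3: "\<And>x. x \<ge> 0 \<Longrightarrow> (f2 has_real_derivative f3 x) (at x within {0..})"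
    and d4: "\<And>x. x \<ge> 0 \<Longrightarrow> (f3 has_real_derivative f4 x) (at x within {0..})"
    and f0: "f 0 \<ge> 0"
    and f10: "f1 0 \<ge> 0"
    and f4pos: "\<And>u. u > 0 \<Longrightarrow> f4 u > 0"
  shows "strict_convex_on {0<..} (\<lambda>u. f u / u\<^sup>2)"
proof (rule strict_convex_on_divide_square)
  define H1 where "H1 u = u\<^sup>2 * f3 u - 2 * u * f2 u + 2 * f1 u" for u
  define H where "H u = u\<^sup>2 * f2 u - 4 * u * f1 u + 6 * f u" for u
  have "(H1 has_real_derivative u\<^sup>2 * f4 u) (at u within {0..})" if "u \<ge> 0" for u
    unfolding H1_def using d1 d2 d3 d4 that
    by (auto intro!: derivative_eq_intros simp: algebra_simps power2_eq_square)
  then have H1_pos: "H1 u > 0" if "u > 0" for u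
    using strict_increase_from_deriv_atLeast[of 0 H1 "\<lambda>u. u\<^sup>2 * f4 u" u] f10 f4pos that
    by (simp add: H1_def)
  have "(H has_real_derivative H1 u) (at u within {0..})" if "u \<ge> 0" for u
    unfolding H_def H1_def using d1 d2 d3 that
    by (auto intro!: derivative_eq_intros simp: algebra_simps power2_eq_square)
  then show "H u > 0" if "u > 0" for u
    using strict_increase_from_deriv_atLeast[of 0 H H1 u] f0 H1_pos that by (simp add: H_def)
  show "(f has_real_derivative f1 u) (at u)" "(f1 has_real_derivative f2 u) (at u)"
    if "u > 0" for u
    using that d1 d2 has_real_derivative_at_within_atLeast by (auto simp: less_imp_le)
qed

end
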